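(* Let $\mathcal{D}=(\gamma,s_0,(E_i)_{i\in N})$ be a PPD with $s_0\in E_i$ for every $i\in N$, and let $\omega$ be an $\mathrm{LTL}_f$ formula. Let $\pi$ be a joint $k$-plan for $N$ such that for every agent $i\in N$, $i$ does not anticipate CPR for $\neg\omega$ in $\pi^{\{i\}}$. Then either $H^{\pi',s_0,\gamma}\models\neg\omega$ for every joint $k$-plan $\pi'$ for $N$, or $H^{\pi,s_0,\gamma}\models\omega$.
   Context: Let $N$ be a finite set of agents, $P$ a finite set of propositional atoms, $S=2^P$ the set of states, and $A$ a finite nonempty set of action names containing a distinguished action $\mathit{skip}$. The language $\mathcal{L}_{PL+}$ is generated by $\phi ::= p \mid do(i,a) \mid \neg\phi \mid \phi\wedge\phi$ ($p\in P$, $i\in N$, $a\in A$). A $k$-history is a pair $H=(H_{st},H_{act})$ with $H_{st}:\{0,\dots,k\}\to S$ and $H_{act}:N\times\{0,\dots,k-1\}\to A$; $H,t\models p$ iff $p\in H_{st}(t)$, $H,t\models do(i,a)$ iff $t<k$ and $H_{act}(i,t)=a$, Boolean connectives as usual. An action theory is a pair $\gamma=(\gamma^+,\gamma^-)$ of functions $N\times A\times P\to\mathcal{L}_{PL+}$ with $\gamma^{+}(i,\mathit{skip},p)=\gamma^{-}(i,\mathit{skip},p)=\bot$. A $k$-history $H$ is $\gamma$-compatible if for every $t<k$, $H_{st}(t+1)=(H_{st}(t)\setminus D_t)\cup U_t$, where $D_t$ is the set of $p$ with $H,t\models\gamma^-(i,H_{act}(i,t),p)$ for some $i$ and $H,t\models\neg\gamma^+(j,H_{act}(j,t),p)$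 for all $j$, and $U_t$ is the set of $p$ with $H,t\models\gamma^+(i,H_{act}(i,t),p)$ for some $i$ and $H,t\models\neg\gamma^-(j,H_{act}(j,t),p)$ for all $j$. A joint $k$-plan for a coalition $J\subseteq N$ is a function $\pi$ assigning to each $i\in J$ a sequence $\pi(i):\{0,\dots,k-1\}\to A$ (an individual plan if $J=\{i\}$). For $J'\subseteq J$, $\pi^{J'}$ is the restriction of $\pi$ to $J'$ and $\pi^{-J'}=\pi^{J\setminus J'}$. A joint $k$-plan $\pi_2$ for $N$ is compatible with a $k$-plan $\pi_1$ for $J$ if $\pi_2^J=\pi_1$. For a state $s$, $H^{\pi,s,\gamma}$ is the unique $\gamma$-compatible $k$-history with $H_{st}(0)=s$ and $H_{act}(i,t)=\pi(i)(t)$. $\mathrm{LTL}_f$ formulas: $\phi::=p\mid do(i,a)\mid\neg\phi\mid\phi\wedge\phi\mid X\phi\mid\phi\,U\,\phi$, with $H,t\models X\phi$ iff $t<k$ and $H,t+1\models\phi$, and $H,t\models\phi_1U\phi_2$ iff there is $t'$ with $t\le t'\le k$, $H,t'\models\phi_2$ and $H,t''\models\phi_1$ for all $t\le t''<t'$; $H\models\phi$ means $H,0\models\phi$. A PPD is $\mathcal{D}=(\gamma,s_0,(E_i)_{i\in N})$ with $\gamma$ an action theory, $s_0\in S$ the initial state, and $E_i\subseteq S$ the set of initial states agent $i$ considers possible. Throughout, a horizon $k$ is fixed and "joint plan" means joint $k$-plan for $N$. For $i\in N$, a joint plan $\pi_1$, a state $s$ and an $\mathrm{LTL}_f$ formula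 $\omega$: $i$ bears Causal Passive Responsibility (CPR) for $\omega$ in $(\pi_1,s)$ if $H^{\pi_1,s,\gamma}\models\omega$ and there is a joint plan $\pi_2$ compatible with $\pi_1^{-\{i\}}$ with $H^{\pi_2,s,\gamma}\not\models\omega$. For an individual $k$-plan $\pi$ of $i$, $i$ anticipates CPR for $\omega$ in $\pi$ if there exist $s_1\in E_i$ and a joint plan $\pi_1$ compatible with $\pi$ such that $i$ bears CPR for $\omega$ in $(\pi_1,s_1)$. *)

theory Defs
  imports Main
begin

(* Agents: type 'n (N = UNIV, finite); atoms: type 'p (finite); actions: type 'a (finite),
   with a distinguished action skip. States are sets of atoms. *)

datatype ('n, 'p, 'a) plf =
    Atom 'p
  | Do 'n 'a
  | PNot "('n, 'p, 'a) plf"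
  | PAnd "('n, 'p, 'a) plf" "('n, 'p, 'a) plf"

datatype ('n, 'p, 'a) ltlf =
    LAtom 'p
  | LDo 'n 'a
  | LNot "('n, 'p, 'a) ltlf"
  | LAnd "('n, 'p, 'a) ltlf" "('n, 'p, 'a) ltlf"
  | LNext "('n, 'p, 'a) ltlf"
  | LUntil "('n, 'p, 'a) ltlf" "('n, 'p, 'a) ltlf"

(* a k-history: states at times 0..k, actions at times 0..k-1 (values outside are irrelevant) *)
record ('n, 'p, 'a) history =
  hst :: "nat \<Rightarrow> 'p set"
  hact :: "'n \<Rightarrow> nat \<Rightarrow> 'a"

fun sat_pl :: "nat \<Rightarrow> ('n, 'p, 'a) history \<Rightarrow> nat \<Rightarrow> ('n, 'p, 'a) plf \<Rightarrow> bool" where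
  "sat_pl k H t (Atom p) = (p \<in> hst H t)"
| "sat_pl k H t (Do i a) = (t < k \<and> hact H i t = a)"
| "sat_pl k H t (PNot \<phi>) = (\<not> sat_pl k H t \<phi>)"
| "sat_pl k H t (PAnd \<phi> \<psi>) = (sat_pl k H t \<phi> \<and> sat_pl k H t \<psi>)"

fun sat_ltl :: "nat \<Rightarrow> ('n, 'p, 'a) history \<Rightarrow> nat \<Rightarrow> ('n, 'p, 'a) ltlf \<Rightarrow> bool" where
  "sat_ltl k H t (LAtom p) = (p \<in> hst H t)"
| "sat_ltl k H t (LDo i a) = (t < k \<and> hact H i t = a)"
| "sat_ltl k H t (LNot \<phi>) = (\<not> sat_ltl k H t \<phi>)"
| "sat_ltl k H t (LAnd \<phi> \<psi>) = (sat_ltl k H t \<phi> \<and> sat_ltl k H t \<psi>)"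
| "sat_ltl k H t (LNext \<phi>) = (t < k \<and> sat_ltl k H (Suc t) \<phi>)"
| "sat_ltl k H t (LUntil \<phi> \<psi>) =
     (\<exists>t'. t \<le> t' \<and> t' \<le> k \<and> sat_ltl k H t' \<psi> \<and> (\<forall>t''. t \<le> t'' \<and> t'' < t' \<longrightarrow> sat_ltl k H t'' \<phi>))"

definition models :: "nat \<Rightarrow> ('n, 'p, 'a) history \<Rightarrow> ('n, 'p, 'a) ltlf \<Rightarrow> bool" where
  "models k H \<phi> = sat_ltl k H 0 \<phi>"

(* action theory gamma = (gamma+, gamma-) *)
type_synonym ('n, 'p, 'a) action_theory =
  "('n \<Rightarrow> 'a \<Rightarrow> 'p \<Rightarrow> ('n, 'p, 'a) plf) \<times> ('n \<Rightarrow> 'a \<Rightarrow> 'p \<Rightarrow> ('n, 'p, 'a) plf)"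

definition PFalse :: "('n, 'p, 'a) plf" where
  "PFalse = PAnd (Atom undefined) (PNot (Atom undefined))"

definition action_theory :: "'a \<Rightarrow> ('n, 'p, 'a) action_theory \<Rightarrow> bool" where
  "action_theory skip \<gamma> \<longleftrightarrow>
     (\<forall>i p. fst \<gamma> i skip p = PFalse \<and> snd \<gamma> i skip p = PFalse)"

definition del_set :: "nat \<Rightarrow> ('n, 'p, 'a) action_theory \<Rightarrow> ('n, 'p, 'a) history \<Rightarrow> nat \<Rightarrow> 'p set" where
  "del_set k \<gamma> H t = {p. (\<exists>i. sat_pl k H t (snd \<gamma> i (hact H i t) p))
                          \<and> (\<forall>j. \<not> sat_pl k H t (fst \<gamma> j (hact H j t) p))}"

definition upd_set :: "nat \<Rightarrow> ('n, 'p, 'a) action_theory \<Rightarrow> ('n, 'p, 'a) history \<Rightarrow> nat \<Rightarrow> 'p set" where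
  "upd_set k \<gamma> H t = {p. (\<exists>i. sat_pl k H t (fst \<gamma> i (hact H i t) p))
                          \<and> (\<forall>j. \<not> sat_pl k H t (snd \<gamma> j (hact H j t) p))}"

definition gamma_compatible :: "nat \<Rightarrow> ('n, 'p, 'a) action_theory \<Rightarrow> ('n, 'p, 'a) history \<Rightarrow> bool" where
  "gamma_compatible k \<gamma> H \<longleftrightarrow>
     (\<forall>t<k. hst H (Suc t) = (hst H t - del_set k \<gamma> H t) \<union> upd_set k \<gamma> H t)"

(* a joint k-plan for N (values at times \<ge> k are irrelevant) *)
type_synonym ('n, 'a) jplan = "'n \<Rightarrow> nat \<Rightarrow> 'a"

definition hist :: "nat \<Rightarrow> ('n, 'p, 'a) action_theory \<Rightarrow> ('n, 'a) jplan \<Rightarrow> 'p set \<Rightarrow> ('n, 'p, 'a) history" where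
  "hist k \<gamma> \<pi> s = (THE H. gamma_compatible k \<gamma> H \<and> hst H 0 = s
        \<and> (\<forall>i t. t < k \<longrightarrow> hact H i t = \<pi> i t)
        \<and> (\<forall>t. t > k \<longrightarrow> hst H t = {}) \<and> (\<forall>i t. t \<ge> k \<longrightarrow> hact H i t = undefined))"

definition CPR :: "nat \<Rightarrow> ('n, 'p, 'a) action_theory \<Rightarrow> 'n \<Rightarrow> ('n, 'a) jplan \<Rightarrow> 'p set
                    \<Rightarrow> ('n, 'p, 'a) ltlf \<Rightarrow> bool" where
  "CPR k \<gamma> i \<pi>1 s \<omega> \<longleftrightarrow>
     models k (hist k \<gamma> \<pi>1 s) \<omega> \<and>
     (\<exists>\<pi>2. (\<forall>j t. j \<noteq> i \<and> t < k \<longrightarrow> \<pi>2 j t = \<pi>1 j t) \<and> \<not> models k (hist k \<gamma> \<pi>2 s) \<omega>)"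

definition anticipates_CPR :: "nat \<Rightarrow> ('n, 'p, 'a) action_theory \<Rightarrow> ('n \<Rightarrow> 'p set set) \<Rightarrow> 'n
                               \<Rightarrow> (nat \<Rightarrow> 'a) \<Rightarrow> ('n, 'p, 'a) ltlf \<Rightarrow> bool" where
  "anticipates_CPR k \<gamma> E i \<pi> \<omega> \<longleftrightarrow>
     (\<exists>s1 \<in> E i. \<exists>\<pi>1. (\<forall>t<k. \<pi>1 i t = \<pi> t) \<and> CPR k \<gamma> i \<pi>1 s1 \<omega>)"

end

theory Submission
  imports Defs
begin

text \<open>Agents can be switched from \<open>\<pi>\<close> to \<open>\<pi>'\<close> one at a time. If \<open>\<not>\<omega>\<close> held under \<open>\<pi>\<close> but
  failed under \<open>\<pi>'\<close>, some switch would be the first to break it; the agent switched there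
  still plays its part of \<open>\<pi>\<close> just before, so in the true initial state \<open>s\<^sub>0 \<in> E\<^sub>i\<close> it would
  bear CPR for \<open>\<not>\<omega>\<close>, which it was assumed not to anticipate.\<close>

lemma unilateral_deviation_closed_imp_all_plans:
  fixes P :: "('n::finite, 'a) jplan \<Rightarrow> bool"
  assumes "P \<pi>"
    and closed: "\<And>i \<sigma> \<sigma>'. P \<sigma> \<Longrightarrow> \<forall>t<k. \<sigma> i t = \<pi> i t
                  \<Longrightarrow> \<forall>j t. j \<noteq> i \<and> t < k \<longrightarrow> \<sigma>' j t = \<sigma> j t \<Longrightarrow> P \<sigma>'"
  shows "P \<pi>'"
proof -
  define mix where "mix S = (\<lambda>j. if j \<in> S then \<pi>' j else \<pi> j)" for S
  have "P (mix S)" if "finite S" for S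
    using that
  proof (induction S rule: finite_induct)
    case empty
    have "mix {} = \<pi>" by (auto simp: mix_def)
    with \<open>P \<pi>\<close> show ?case by simp
  next
    case (insert i S)
    show ?case
      by (rule closed[OF insert.IH]) (use insert.hyps in \<open>auto simp: mix_def\<close>)
  qed
  moreover have "mix UNIV = \<pi>'" by (auto simp: mix_def)
  ultimately show ?thesis by (metis finite)
qed

lemma not_anticipates_CPR_imp_deviation_closed:
  assumes "\<not> anticipates_CPR k \<gamma> E i \<pi>\<^sub>i \<phi>"
    and "s \<in> E i"
    and "models k (hist k \<gamma> \<sigma> s) \<phi>"
    and "\<forall>t<k. \<sigma> i t = \<pi>\<^sub>i t"
    and "\<forall>j t. j \<noteq> i \<and> t < k \<longrightarrow> \<sigma>' j t = \<sigma> j t"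
  shows "models k (hist k \<gamma> \<sigma>' s) \<phi>"
proof (rule ccontr)
  assume "\<not> models k (hist k \<gamma> \<sigma>' s) \<phi>"
  with assms(3-5) have "CPR k \<gamma> i \<sigma> s \<phi>"
    unfolding CPR_def by blast
  with assms(2,4) have "anticipates_CPR k \<gamma> E i \<pi>\<^sub>i \<phi>"
    unfolding anticipates_CPR_def by blast
  with assms(1) show False ..
qed

theorem theorem5:
  fixes k :: nat
    and skip :: "'a::finite"
    and \<gamma> :: "('n::finite, 'p::finite, 'a) action_theory"
    and s0 :: "'p set"
    and E :: "'n \<Rightarrow> 'p set set"
    and \<omega> :: "('n, 'p, 'a) ltlf"
    and \<pi> :: "('n, 'a) jplan"
  assumes "action_theory skip \<gamma>"
    and "\<forall>i. s0 \<in> E i"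
    and "\<forall>i. \<not> anticipates_CPR k \<gamma> E i (\<pi> i) (LNot \<omega>)"
  shows "(\<forall>\<pi>'. models k (hist k \<gamma> \<pi>' s0) (LNot \<omega>)) \<or> models k (hist k \<gamma> \<pi> s0) \<omega>"
proof (cases "models k (hist k \<gamma> \<pi> s0) (LNot \<omega>)")
  case True
  have "models k (hist k \<gamma> \<pi>' s0) (LNot \<omega>)" for \<pi>'
  proof (rule unilateral_deviation_closed_imp_all_plans
      [where P = "\<lambda>\<sigma>. models k (hist k \<gamma> \<sigma> s0) (LNot \<omega>)"])
    show "models k (hist k \<gamma> \<pi> s0) (LNot \<omega>)" by (fact True)
  next
    fix i \<sigma> \<sigma>'
    assume "models k (hist k \<gamma> \<sigma> s0) (LNot \<omega>)" "\<forall>t<k. \<sigma> i t = \<pi> i t"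
      and "\<forall>j t. j \<noteq> i \<and> t < k \<longrightarrow> \<sigma>' j t = \<sigma> j t"
    with assms(2,3) show "models k (hist k \<gamma> \<sigma>' s0) (LNot \<omega>)"
      by (blast intro: not_anticipates_CPR_imp_deviation_closed)
  qed
  then show ?thesis by blast
next
  case False
  then show ?thesis by (simp add: models_def)
qed

end
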